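(* For every integer $k\ge 2$ and $n=\frac{k(2k^2+1)}{3}$, $$6n-\sqrt[3]{486}\,n^{2/3} < C_{fcc}(n)\le C(n).$$
   Context: A packing of unit balls in $\mathbb{E}^3$ is a family of closed unit balls with pairwise disjoint interiors; its contact number is the number of unordered pairs of balls whose centers are at distance exactly $2$. $C(n)$ is the maximum contact number over all packings of $n$ unit balls in $\mathbb{E}^3$. $\Lambda_{fcc}$ denotes the face-centered cubic lattice scaled so that its shortest non-zero vector has length $2$ (e.g. the set of integer points $(x,y,z)\in\mathbb{Z}^3$ with $x+y+z$ even, scaled by $\sqrt{2}$), and $C_{fcc}(n)$ is the largest contact number among packings of $n$ unit balls whose centers all lie in $\Lambda_{fcc}$. *)

theory Defs
  imports "HOL-Analysis.Analysis"
begin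

text \<open>A packing of unit balls in Euclidean 3-space is represented by the finite set of
  its centers; closed unit balls have pairwise disjoint interiors iff distinct centers are
  at distance at least 2.\<close>

definition unit_ball_packing :: "(real^3) set \<Rightarrow> bool" where
  "unit_ball_packing P \<longleftrightarrow> finite P \<and> (\<forall>x\<in>P. \<forall>y\<in>P. x \<noteq> y \<longrightarrow> dist x y \<ge> 2)"

definition contact_number :: "(real^3) set \<Rightarrow> nat" where
  "contact_number P = card {{x, y} | x y. x \<in> P \<and> y \<in> P \<and> dist x y = 2}"

definition C :: "nat \<Rightarrow> nat" where
  "C n = Sup {contact_number P | P. unit_ball_packing P \<and> card P = n}"

text \<open>Face-centered cubic lattice, scaled so that the shortest nonzero vector has length 2:
  sqrt 2 times the integer points with even coordinate sum.\<close>

definition fcc_lattice :: "(real^3) set" where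
  "fcc_lattice = {x. \<exists>v::int^3. even (v$1 + v$2 + v$3) \<and>
                        (\<forall>i. x$i = sqrt 2 * real_of_int (v$i))}"

definition C_fcc :: "nat \<Rightarrow> nat" where
  "C_fcc n = Sup {contact_number P | P. unit_ball_packing P \<and> card P = n \<and> P \<subseteq> fcc_lattice}"

end

theory Submission
  imports Defs
begin

(* Lattice points are integer triples; the checkerboard lattice D3 = {x + y + z even} is mapped
   onto the scaled fcc lattice by p \<mapsto> sqrt 2 * p.  Distinct points of D3 are at distance
   at least 2 after scaling, and the twelve shortest vectors (\<plusminus>1,\<plusminus>1,0), ... give contacts.

   1. For any finite S \<subseteq> D3 the image is a packing in the fcc lattice whose contact number
      is at least the sum, over six directions d (one from each pair \<plusminus>d), of the number of
      p \<in> S with p + d \<in> S.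
   2. The lattice octahedron of edge a has (a+1)(2(a+1)^2+1)/3 points (it splits into two
      staircase pyramids).  For each direction d at most (a+1)^2 of its points p have p + d
      outside, since such p lie on a single face, which is parametrised by two coordinates.
      With a = k - 1 this gives n balls and at least 6n - 6k^2 contacts.
   3. 6k^2 < cbrt 486 * n^(2/3), which amounts to (6k^2)^3 < 486 n^2, a polynomial inequality. *)

type_synonym pt = "int \<times> int \<times> int"

definition emb :: "pt \<Rightarrow> real^3" where
  "emb = (\<lambda>(x, y, z). vector [sqrt 2 * of_int x, sqrt 2 * of_int y, sqrt 2 * of_int z])"

fun sqnorm :: "pt \<Rightarrow> int" where
  "sqnorm (x, y, z) = x\<^sup>2 + y\<^sup>2 + z\<^sup>2"

lemma dist_emb: "dist (emb p) (emb q) = sqrt (2 * of_int (sqnorm (p - q)))"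
proof -
  obtain x y z x' y' z' where p: "p = (x, y, z)" and q: "q = (x', y', z')"
    by (cases p, cases q) auto
  have "dist (emb p) (emb q) =
      sqrt ((sqrt 2 * x - sqrt 2 * x')\<^sup>2 + (sqrt 2 * y - sqrt 2 * y')\<^sup>2 + (sqrt 2 * z - sqrt 2 * z')\<^sup>2)"
    unfolding p q emb_def by (simp add: dist_vec_def L2_set_def sum_3 dist_real_def)
  also have "\<dots> = sqrt (2 * of_int (sqnorm (p - q)))"
    unfolding p q by (simp add: power2_eq_square algebra_simps)
  finally show ?thesis .
qed

lemma inj_emb: "inj emb"
  by (auto simp: inj_def emb_def vec_eq_iff forall_3)

definition D3 :: "pt set" where
  "D3 = {(x, y, z). even (x + y + z)}"

lemma D3_diff: "p \<in> D3 \<Longrightarrow> q \<in> D3 \<Longrightarrow> p - q \<in> D3"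
  by (cases p, cases q) (auto simp: D3_def)

lemma sqnorm_D3_ge_2:
  assumes "p \<in> D3" and "p \<noteq> 0"
  shows "sqnorm p \<ge> 2"
proof -
  obtain x y z where p: "p = (x, y, z)" by (cases p)
  have sq_ge_abs: "\<bar>t\<bar> \<le> t\<^sup>2" for t :: int
  proof (cases "t = 0")
    case False
    then have "\<bar>t\<bar> * 1 \<le> \<bar>t\<bar> * \<bar>t\<bar>" by (intro mult_left_mono) auto
    then show ?thesis by (simp add: power2_eq_square)
  qed simp
  have "even (\<bar>x\<bar> + \<bar>y\<bar> + \<bar>z\<bar>)" "\<bar>x\<bar> + \<bar>y\<bar> + \<bar>z\<bar> \<noteq> 0"
    using assms by (auto simp: p D3_def zero_prod_def)
  then have "\<bar>x\<bar> + \<bar>y\<bar> + \<bar>z\<bar> \<ge> 2"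
    by (smt (verit) odd_one)
  then show ?thesis
    using sq_ge_abs[of x] sq_ge_abs[of y] sq_ge_abs[of z] by (simp add: p)
qed

lemma emb_D3_fcc:
  assumes "p \<in> D3"
  shows "emb p \<in> fcc_lattice"
proof -
  obtain x y z where p: "p = (x, y, z)" by (cases p)
  show ?thesis
    unfolding fcc_lattice_def
    by (rule CollectI, rule exI[of _ "vector [x, y, z] :: int^3"])
       (use assms in \<open>simp add: p D3_def emb_def forall_3\<close>)
qed

lemma packing_emb:
  assumes "finite S" and "S \<subseteq> D3"
  shows "unit_ball_packing (emb ` S)"
  unfolding unit_ball_packing_def
proof (intro conjI ballI impI)
  show "finite (emb ` S)" using assms(1) by simp
  fix u w assume "u \<in> emb ` S" "w \<in> emb ` S" "u \<noteq> w"
  then obtain p q where u: "u = emb p" and w: "w = emb q" and pq: "p \<in> S" "q \<in> S" "p \<noteq> q"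
    by blast
  have "2 \<le> sqnorm (p - q)"
    using pq assms(2) by (intro sqnorm_D3_ge_2 D3_diff) auto
  then have "sqrt (2 * 2) \<le> sqrt (2 * of_int (sqnorm (p - q)))"
    by (intro real_sqrt_le_mono) simp
  then show "2 \<le> dist u w"
    by (simp add: u w dist_emb)
qed

text \<open>Half of the twelve shortest vectors of the checkerboard lattice, one from each
  pair of opposite vectors.\<close>

definition Dirs :: "pt set" where
  "Dirs = {(1, 1, 0), (1, -1, 0), (1, 0, 1), (1, 0, -1), (0, 1, 1), (0, 1, -1)}"

lemma card_Dirs: "card Dirs = 6"
  by (simp add: Dirs_def)

lemma sqnorm_Dirs: "d \<in> Dirs \<Longrightarrow> sqnorm d = 2"
  by (auto simp: Dirs_def)

lemma Dirs_no_opposite: "d \<in> Dirs \<Longrightarrow> d' \<in> Dirs \<Longrightarrow> d + d' \<noteq> 0"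
  by (auto simp: Dirs_def zero_prod_def)

text \<open>Counting contacts by direction: each pair p, p + d inside S gives a contact, and different
  (d, p) give different contacts because no two directions are opposite.\<close>

lemma contact_number_ge:
  assumes "finite S"
  shows "(\<Sum>d\<in>Dirs. card {p \<in> S. p + d \<in> S}) \<le> contact_number (emb ` S)"
proof -
  define E where "E d = {p \<in> S. p + d \<in> S}" for d
  define pair where "pair = (\<lambda>(d, p). {emb p, emb (p + d)})"
  let ?contacts = "{{x, y} | x y. x \<in> emb ` S \<and> y \<in> emb ` S \<and> dist x y = 2}"
  have "inj_on pair (Sigma Dirs E)"
  proof (rule inj_onI, clarify)
    fix d p d' p'
    assume d: "d \<in> Dirs" "d' \<in> Dirs" and "pair (d, p) = pair (d', p')"
    then have "(p = p' \<and> p + d = p' + d') \<or> (p = p' + d' \<and> p + d = p')"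
      by (auto simp: pair_def doubleton_eq_iff inj_eq[OF inj_emb])
    moreover have "\<not> (p = p' + d' \<and> p + d = p')"
    proof
      assume "p = p' + d' \<and> p + d = p'"
      then have "d + d' = 0" by (metis add.commute add_cancel_left_right add.assoc)
      with d show False using Dirs_no_opposite by blast
    qed
    ultimately show "d = d' \<and> p = p'" by auto
  qed
  moreover have "pair ` Sigma Dirs E \<subseteq> ?contacts"
  proof
    fix c assume "c \<in> pair ` Sigma Dirs E"
    then obtain d p where "d \<in> Dirs" "p \<in> E d" "c = pair (d, p)"
      by blast
    moreover have "dist (emb (p + d)) (emb p) = 2"
      using sqnorm_Dirs[OF \<open>d \<in> Dirs\<close>] by (simp add: dist_emb)
    ultimately show "c \<in> ?contacts"
      unfolding pair_def E_def by (auto simp: dist_commute)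
  qed
  moreover have "finite ?contacts"
    by (rule finite_subset[of _ "Pow (emb ` S)"]) (use assms in auto)
  ultimately have "card (Sigma Dirs E) \<le> card ?contacts"
    by (rule card_inj_on_le)
  moreover have "card (Sigma Dirs E) = (\<Sum>d\<in>Dirs. card (E d))"
    using assms by (intro card_SigmaI) (auto simp: Dirs_def E_def)
  ultimately show ?thesis
    by (simp add: E_def contact_number_def)
qed

definition oct :: "int \<Rightarrow> pt set" where
  "oct a = {(x, y, z). \<bar>x - a\<bar> + \<bar>y\<bar> + \<bar>z\<bar> \<le> a \<and> even (x + y + z)}"

lemma oct_subset_D3: "oct a \<subseteq> D3"
  by (auto simp: oct_def D3_def)

text \<open>The octahedron is counted through two pyramids over the square layers z \<ge> 0 and z < 0;
  in the coordinates u = (x + y - |z|)/2, v = u - y, w = a - |z| each pyramid becomes a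
  staircase of nested squares.\<close>

definition staircase :: "int \<Rightarrow> pt set" where
  "staircase a = {(u, v, w). 0 \<le> u \<and> u \<le> w \<and> 0 \<le> v \<and> v \<le> w \<and> w \<le> a}"

lemma finite_staircase: "finite (staircase a)"
  by (rule finite_subset[of _ "{0..a} \<times> {0..a} \<times> {0..a}"]) (auto simp: staircase_def)

lemma card_staircase: "6 * int (card (staircase (int m))) = (int m + 1) * (int m + 2) * (2 * int m + 3)"
proof (induction m)
  case 0
  have "staircase 0 = {(0, 0, 0)}" by (auto simp: staircase_def)
  then show ?case by simp
next
  case (Suc m)
  let ?layer = "{0..int m + 1} \<times> {0..int m + 1} \<times> {int m + 1}"
  have "staircase (int (Suc m)) = staircase (int m) \<union> ?layer"
    by (auto simp: staircase_def)
  moreover have "staircase (int m) \<inter> ?layer = {}"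
    by (auto simp: staircase_def)
  ultimately have "card (staircase (int (Suc m))) = card (staircase (int m)) + card ?layer"
    by (simp add: card_Un_disjoint finite_staircase)
  moreover have "int (card ?layer) = (int m + 2) * (int m + 2)"
    by (simp add: card_cartesian_product add.commute)
  ultimately show ?case
    using Suc.IH by (simp add: algebra_simps)
qed

fun upper_half :: "int \<Rightarrow> pt \<Rightarrow> pt" where
  "upper_half a (u, v, w) = (u + v + a - w, u - v, a - w)"

fun lower_half :: "int \<Rightarrow> pt \<Rightarrow> pt" where
  "lower_half a (u, v, w) = (u + v + a - w, u - v, w - a)"

lemma oct_decomp: "oct a = upper_half a ` staircase a \<union> lower_half a ` staircase (a - 1)"
proof
  show "upper_half a ` staircase a \<union> lower_half a ` staircase (a - 1) \<subseteq> oct a"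
    unfolding staircase_def oct_def by (auto; arith)
  show "oct a \<subseteq> upper_half a ` staircase a \<union> lower_half a ` staircase (a - 1)"
  proof
    fix p assume "p \<in> oct a"
    then obtain x y z where p: "p = (x, y, z)" and inside: "\<bar>x - a\<bar> + \<bar>y\<bar> + \<bar>z\<bar> \<le> a"
      and even: "even (x + y + z)"
      unfolding oct_def by auto
    show "p \<in> upper_half a ` staircase a \<union> lower_half a ` staircase (a - 1)"
    proof (cases "z \<ge> 0")
      case True
      have "even (x + y - z)" using even by (simp add: even_add)
      then obtain u where u: "x + y - z = 2 * u" by (metis evenE)
      have "(u, u - y, a - z) \<in> staircase a"
        using inside True u by (auto simp: staircase_def; arith)
      moreover have "upper_half a (u, u - y, a - z) = p"
        using u by (simp add: p)
      ultimately show ?thesis by (metis UnI1 image_eqI)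
    next
      case False
      from even obtain u where u: "x + y + z = 2 * u" by (metis evenE)
      have "(u, u - y, a + z) \<in> staircase (a - 1)"
        using inside False u by (auto simp: staircase_def; arith)
      moreover have "lower_half a (u, u - y, a + z) = p"
        using u by (simp add: p)
      ultimately show ?thesis by (metis UnI2 image_eqI)
    qed
  qed
qed

lemma finite_oct: "finite (oct a)"
  by (simp add: oct_decomp finite_staircase)

lemma card_oct:
  assumes "a \<ge> 0"
  shows "3 * int (card (oct a)) = (a + 1) * (2 * (a + 1)\<^sup>2 + 1)"
proof -
  have "inj_on (upper_half a) (staircase a)" "inj_on (lower_half a) (staircase (a - 1))"
    by (auto simp: inj_on_def staircase_def)
  moreover have "upper_half a ` staircase a \<inter> lower_half a ` staircase (a - 1) = {}"
    by (auto simp: staircase_def)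
  ultimately have "card (oct a) = card (staircase a) + card (staircase (a - 1))"
    by (simp add: oct_decomp card_Un_disjoint finite_staircase card_image)
  moreover have "6 * int (card (staircase a)) = (a + 1) * (a + 2) * (2 * a + 3)"
    using card_staircase[of "nat a"] assms by simp
  moreover have "6 * int (card (staircase (a - 1))) = a * (a + 1) * (2 * a + 1)"
  proof (cases "a = 0")
    case True
    then have "staircase (a - 1) = {}" by (auto simp: staircase_def)
    then show ?thesis using True by simp
  next
    case False
    then show ?thesis
      using card_staircase[of "nat (a - 1)"] assms by (simp add: algebra_simps)
  qed
  ultimately show ?thesis
    by (simp add: algebra_simps power2_eq_square)
qed

text \<open>A set on which two coordinate functions f, g are nonnegative and the third coordinate
  h satisfies |f| + |g| + |h| = a has at most (a+1)^2 elements, provided (f, g, h) is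
  injective: then already (f, h) is injective, and the pairs (f, h) fit into a square.\<close>

lemma face_card_le:
  fixes B :: "'a set" and f g h :: "'a \<Rightarrow> int"
  assumes inj: "inj_on (\<lambda>p. (f p, g p, h p)) B"
    and face: "\<And>p. p \<in> B \<Longrightarrow> 0 \<le> f p \<and> 0 \<le> g p \<and> \<bar>f p\<bar> + \<bar>g p\<bar> + \<bar>h p\<bar> = a"
  shows "card B \<le> nat (a + 1) ^ 2"
proof -
  define fold :: "int \<Rightarrow> int \<Rightarrow> int \<times> int"
    where "fold u w = (if 0 \<le> w then (u, u + w) else (u - w, u))" for u w
  have fold_inj: "fold u w = fold u' w' \<Longrightarrow> u = u' \<and> w = w'" for u w u' w'
    by (auto simp: fold_def split: if_splits)
  have "inj_on (\<lambda>p. fold (f p) (h p)) B"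
  proof (rule inj_onI)
    fix p q assume "p \<in> B" "q \<in> B" "fold (f p) (h p) = fold (f q) (h q)"
    with face[of p] face[of q] have "(f p, g p, h p) = (f q, g q, h q)"
      by (auto dest: fold_inj)
    with inj \<open>p \<in> B\<close> \<open>q \<in> B\<close> show "p = q"
      by (auto dest: inj_onD)
  qed
  moreover have "fold (f p) (h p) \<in> {0..a} \<times> {0..a}" if "p \<in> B" for p
    using face[OF that] by (auto simp: fold_def)
  then have "(\<lambda>p. fold (f p) (h p)) ` B \<subseteq> {0..a} \<times> {0..a}"
    by blast
  ultimately have "card B \<le> card ({0..a} \<times> {0..a})"
    by (intro card_inj_on_le) auto
  then show ?thesis
    by (simp add: power2_eq_square)
qed

text \<open>A point of the octahedron from which the step d leaves it lies on the boundary face whose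
  outer normal has the signs of d: the norm can grow by at most 2 per step, and by parity it
  cannot start at a - 1.\<close>

lemma oct_exit:
  assumes "(d1, d2, d3) \<in> Dirs" and "(x, y, z) \<in> oct a" and "(x + d1, y + d2, z + d3) \<notin> oct a"
  shows "\<bar>x - a\<bar> + \<bar>y\<bar> + \<bar>z\<bar> = a \<and> 0 \<le> d1 * (x - a) \<and> 0 \<le> d2 * y \<and> 0 \<le> d3 * z"
proof -
  have inside: "\<bar>x - a\<bar> + \<bar>y\<bar> + \<bar>z\<bar> \<le> a" and "even (x + y + z)"
    using assms(2) by (auto simp: oct_def)
  then have "even (\<bar>x - a\<bar> + \<bar>y\<bar> + \<bar>z\<bar> + a)"
    by (auto simp: even_add)
  then have parity: "\<bar>x - a\<bar> + \<bar>y\<bar> + \<bar>z\<bar> \<noteq> a - 1"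
    by (metis diff_add_cancel even_add odd_one)
  have "even (d1 + d2 + d3)"
    using assms(1) by (auto simp: Dirs_def)
  with \<open>even (x + y + z)\<close> assms(3)
  have outside: "a < \<bar>x + d1 - a\<bar> + \<bar>y + d2\<bar> + \<bar>z + d3\<bar>"
    by (auto simp: oct_def algebra_simps)
  from assms(1) consider "(d1, d2, d3) = (1, 1, 0)" | "(d1, d2, d3) = (1, -1, 0)"
    | "(d1, d2, d3) = (1, 0, 1)" | "(d1, d2, d3) = (1, 0, -1)"
    | "(d1, d2, d3) = (0, 1, 1)" | "(d1, d2, d3) = (0, 1, -1)"
    by (auto simp: Dirs_def)
  then show ?thesis
    using inside parity outside by cases (simp; arith)+
qed

lemma card_oct_exits:
  assumes "d \<in> Dirs"
  shows "card {p \<in> oct a. p + d \<notin> oct a} \<le> nat (a + 1) ^ 2"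
proof -
  let ?B = "{p \<in> oct a. p + d \<notin> oct a}"
  have exit: "\<bar>fst p - a\<bar> + \<bar>fst (snd p)\<bar> + \<bar>snd (snd p)\<bar> = a \<and> 0 \<le> fst d * (fst p - a)
      \<and> 0 \<le> fst (snd d) * fst (snd p) \<and> 0 \<le> snd (snd d) * snd (snd p)"
    if "p \<in> ?B" for p
    using that assms oct_exit[of "fst d" "fst (snd d)" "snd (snd d)" "fst p" "fst (snd p)" "snd (snd p)" a]
    by (cases p, cases d) simp
  from assms consider "d = (1, 1, 0)" | "d = (1, -1, 0)" | "d = (1, 0, 1)" | "d = (1, 0, -1)"
      | "d = (0, 1, 1)" | "d = (0, 1, -1)"
    by (auto simp: Dirs_def)
  then show ?thesis
  proof cases
    case 1
    show ?thesis
      by (rule face_card_le[where f = "\<lambda>p. fst p - a" and g = "\<lambda>p. fst (snd p)" and h = "\<lambda>p. snd (snd p)"])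
        (simp add: inj_on_def prod_eq_iff, frule exit, simp add: 1, linarith)
  next
    case 2
    show ?thesis
      by (rule face_card_le[where f = "\<lambda>p. fst p - a" and g = "\<lambda>p. - fst (snd p)" and h = "\<lambda>p. snd (snd p)"])
        (simp add: inj_on_def prod_eq_iff, frule exit, simp add: 2, linarith)
  next
    case 3
    show ?thesis
      by (rule face_card_le[where f = "\<lambda>p. fst p - a" and g = "\<lambda>p. snd (snd p)" and h = "\<lambda>p. fst (snd p)"])
        (simp add: inj_on_def prod_eq_iff, frule exit, simp add: 3, linarith)
  next
    case 4
    show ?thesis
      by (rule face_card_le[where f = "\<lambda>p. fst p - a" and g = "\<lambda>p. - snd (snd p)" and h = "\<lambda>p. fst (snd p)"])
        (simp add: inj_on_def prod_eq_iff, frule exit, simp add: 4, linarith)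
  next
    case 5
    show ?thesis
      by (rule face_card_le[where f = "\<lambda>p. fst (snd p)" and g = "\<lambda>p. snd (snd p)" and h = "\<lambda>p. fst p - a"])
        (simp add: inj_on_def prod_eq_iff, frule exit, simp add: 5, linarith)
  next
    case 6
    show ?thesis
      by (rule face_card_le[where f = "\<lambda>p. fst (snd p)" and g = "\<lambda>p. - snd (snd p)" and h = "\<lambda>p. fst p - a"])
        (simp add: inj_on_def prod_eq_iff, frule exit, simp add: 6, linarith)
  qed
qed

lemma card_oct_le_inner:
  assumes "d \<in> Dirs"
  shows "card (oct a) \<le> card {p \<in> oct a. p + d \<in> oct a} + nat (a + 1) ^ 2"
proof -
  have "oct a = {p \<in> oct a. p + d \<in> oct a} \<union> {p \<in> oct a. p + d \<notin> oct a}"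
    by blast
  then have "card (oct a) = card {p \<in> oct a. p + d \<in> oct a} + card {p \<in> oct a. p + d \<notin> oct a}"
    by (metis (no_types, lifting) card_Un_disjoint disjoint_iff finite_Un finite_oct mem_Collect_eq)
  then show ?thesis
    using card_oct_exits[OF assms, of a] by linarith
qed

lemma contacts_oct:
  "6 * card (oct a) \<le> contact_number (emb ` oct a) + 6 * nat (a + 1) ^ 2"
proof -
  have "6 * card (oct a) = (\<Sum>d\<in>Dirs. card (oct a))"
    by (simp add: card_Dirs)
  also have "\<dots> \<le> (\<Sum>d\<in>Dirs. card {p \<in> oct a. p + d \<in> oct a} + nat (a + 1) ^ 2)"
    by (intro sum_mono card_oct_le_inner)
  also have "\<dots> = (\<Sum>d\<in>Dirs. card {p \<in> oct a. p + d \<in> oct a}) + 6 * nat (a + 1) ^ 2"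
    by (simp add: sum.distrib card_Dirs)
  also have "\<dots> \<le> contact_number (emb ` oct a) + 6 * nat (a + 1) ^ 2"
    using contact_number_ge[OF finite_oct] by simp
  finally show ?thesis .
qed

text \<open>The suprema defining C and C_fcc range over bounded sets, because a packing of n balls has
  at most 2^n contacts; hence every fcc packing bounds C_fcc from below, and C_fcc n \<le> C n.\<close>

lemma contact_number_le_pow:
  assumes "finite P"
  shows "contact_number P \<le> 2 ^ card P"
proof -
  have "contact_number P \<le> card (Pow P)"
    unfolding contact_number_def by (rule card_mono) (auto simp: assms)
  then show ?thesis
    by (simp add: card_Pow assms)
qed

lemma bdd_above_contacts: "bdd_above {contact_number Q | Q. unit_ball_packing Q \<and> card Q = n}"
  by (rule bdd_aboveI[of _ "2 ^ n"]) (auto simp: unit_ball_packing_def contact_number_le_pow)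

lemma contact_number_le_C_fcc:
  assumes "unit_ball_packing P" and "P \<subseteq> fcc_lattice"
  shows "contact_number P \<le> C_fcc (card P)"
  unfolding C_fcc_def
  by (rule cSup_upper[OF _ bdd_above_mono[OF bdd_above_contacts]]) (use assms in auto)

lemma C_fcc_le_C: "C_fcc n \<le> C n"
proof (cases "\<exists>P. unit_ball_packing P \<and> card P = n \<and> P \<subseteq> fcc_lattice")
  case True
  then show ?thesis
    unfolding C_fcc_def C_def by (intro cSup_subset_mono bdd_above_contacts) auto
next
  case False
  then have "{contact_number P | P. unit_ball_packing P \<and> card P = n \<and> P \<subseteq> fcc_lattice} = {}"
    by auto
  then have "C_fcc n = 0"
    unfolding C_fcc_def by (simp only: Sup_nat_empty)
  then show ?thesis
    by simp
qed

text \<open>The analytic inequality: after cubing it reads (6k^2)^3 < 486 n^2, and 486 (3n)^2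
  exceeds 9 (6k^2)^3 by 1944 k^4 + 486 k^2.\<close>

lemma six_k_sq_lt:
  fixes k n :: nat
  assumes "k \<ge> 1" and "3 * n = k * (2 * k\<^sup>2 + 1)"
  shows "6 * real k ^ 2 < root 3 486 * real n powr (2/3)"
proof -
  have n: "3 * real n = real k * (2 * real k ^ 2 + 1)"
    using arg_cong[OF assms(2), of real]
    by (simp only: of_nat_mult of_nat_add of_nat_power of_nat_numeral of_nat_1)
  have "9 * (486 * real n ^ 2) = 486 * (3 * real n) ^ 2"
    by (simp add: power_mult_distrib)
  also have "\<dots> = 9 * (6 * real k ^ 2) ^ 3 + 1944 * real k ^ 4 + 486 * real k ^ 2"
    unfolding n by (simp add: power2_eq_square algebra_simps eval_nat_numeral)
  finally have cube: "9 * (486 * real n ^ 2) = 9 * (6 * real k ^ 2) ^ 3 + 1944 * real k ^ 4 + 486 * real k ^ 2" .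
  have "0 < real k ^ 4" "0 \<le> real k ^ 2"
    using assms(1) by auto
  with cube have "(6 * real k ^ 2) ^ 3 < 486 * real n ^ 2"
    by linarith
  then have "root 3 ((6 * real k ^ 2) ^ 3) < root 3 (486 * real n ^ 2)"
    by simp
  moreover have "6 * real k ^ 2 = root 3 ((6 * real k ^ 2) ^ 3)"
    by (rule real_root_power_cancel[symmetric]) auto
  moreover have "root 3 486 * real n powr (2/3) = root 3 (486 * real n ^ 2)"
  proof -
    have "n > 0"
      using assms by (cases "n = 0") auto
    then have "real n powr (2/3) = root 3 (real n ^ 2)"
      by (simp add: root_powr_inverse powr_powr flip: powr_numeral)
    then show ?thesis
      by (simp add: real_root_mult)
  qed
  ultimately show ?thesis
    by simp
qed

theorem theorem1:
  fixes k n :: nat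
  assumes "k \<ge> 2"
    and "3 * n = k * (2 * k^2 + 1)"
  shows "6 * real n - root 3 486 * real n powr (2/3) < real (C_fcc n) \<and> C_fcc n \<le> C n"
proof -
  define a where "a = int k - 1"
  define P where "P = emb ` oct a"
  have "3 * int (card (oct a)) = int (3 * n)"
    using card_oct[of a] assms by (simp add: a_def assms(2) algebra_simps)
  then have card_oct_n: "card (oct a) = n"
    by linarith
  have "card P = n"
    using card_oct_n inj_on_subset[OF inj_emb] by (simp add: P_def card_image)
  moreover have "unit_ball_packing P"
    unfolding P_def by (rule packing_emb[OF finite_oct oct_subset_D3])
  moreover have "P \<subseteq> fcc_lattice"
    unfolding P_def using oct_subset_D3 emb_D3_fcc by blast
  ultimately have "contact_number P \<le> C_fcc n"
    using contact_number_le_C_fcc by blast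
  moreover have "6 * n \<le> contact_number P + 6 * k ^ 2"
    using contacts_oct[of a] card_oct_n assms(1) by (simp add: P_def a_def)
  ultimately have "real (6 * n) \<le> real (C_fcc n + 6 * k ^ 2)"
    by (simp only: of_nat_le_iff)
  moreover have "6 * real k ^ 2 < root 3 486 * real n powr (2/3)"
    using assms by (intro six_k_sq_lt) auto
  ultimately show ?thesis
    using C_fcc_le_C[of n] by simp
qed

end
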